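(* Let $D$ be a digon-free digraph with $n$ vertices, and let $\tilde{\Delta}=\max\{\sqrt{d^+(v)d^-(v)} : v\in V(D)\}$. Then $$\alpha(D)\geq \frac{n}{\frac{2\tilde{\Delta}}{3}+1}.$$
   Context: All digraphs are finite, loopless and strict (at most one edge from $u$ to $v$ for distinct $u,v$). A digraph is digon-free if it has no directed cycle of length $2$. $d^+(v)$ and $d^-(v)$ denote the out-degree and in-degree of $v$. A subset $S\subseteq V(D)$ is acyclic if $D[S]$ contains no directed cycle; $\alpha(D)$ is the maximum size of an acyclic subset of $V(D)$. *)

theory Defs
  imports Complex_Main
begin

definition digraph :: "'a set \<Rightarrow> ('a \<times> 'a) set \<Rightarrow> bool" where
  "digraph V A \<longleftrightarrow> finite V \<and> A \<subseteq> V \<times> V \<and> (\<forall>v. (v, v) \<notin> A)"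

definition digon_free :: "('a \<times> 'a) set \<Rightarrow> bool" where
  "digon_free A \<longleftrightarrow> (\<forall>u v. (u, v) \<in> A \<longrightarrow> (v, u) \<notin> A)"

definition out_deg :: "'a set \<Rightarrow> ('a \<times> 'a) set \<Rightarrow> 'a \<Rightarrow> nat" where
  "out_deg V A v = card {w \<in> V. (v, w) \<in> A}"

definition in_deg :: "'a set \<Rightarrow> ('a \<times> 'a) set \<Rightarrow> 'a \<Rightarrow> nat" where
  "in_deg V A v = card {w \<in> V. (w, v) \<in> A}"

definition acyclic_set :: "('a \<times> 'a) set \<Rightarrow> 'a set \<Rightarrow> bool" where
  "acyclic_set A S \<longleftrightarrow> acyclic (A \<inter> (S \<times> S))"

definition dichromatic_alpha :: "'a set \<Rightarrow> ('a \<times> 'a) set \<Rightarrow> nat" where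
  "dichromatic_alpha V A = Max {card S | S. S \<subseteq> V \<and> acyclic_set A S}"

definition geo_max_deg :: "'a set \<Rightarrow> ('a \<times> 'a) set \<Rightarrow> real" where
  "geo_max_deg V A = Max ((\<lambda>v. sqrt (real (out_deg V A v) * real (in_deg V A v))) ` V)"

end

theory Submission
  imports Defs
begin

text \<open>
  In a uniformly random ordering, a vertex with \<open>a\<close> out-neighbours and \<open>b\<close> in-neighbours
  (disjoint sets, as the digraph is digon-free) precedes all its out-neighbours or all its
  in-neighbours with probability \<open>1/(a+1) + 1/(b+1) - 1/(a+b+1)\<close>, which is at least
  \<open>3/(2\<surd>(ab)+3)\<close>. The sum of these probabilities over the vertices of \<open>D[W]\<close> is
  derandomised greedily: averaged over \<open>w \<in> W\<close>, the potential of \<open>W - {w}\<close> plus the indicator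
  that \<open>w\<close> is a sink or source of \<open>D[W]\<close> equals the potential of \<open>W\<close>. So some \<open>w\<close> can be
  deleted without losing potential, and added to the acyclic set built inductively from
  \<open>W - {w}\<close> when it is a sink or source, which keeps that set acyclic.
\<close>

definition sink_or_source_prob :: "nat \<Rightarrow> nat \<Rightarrow> real" where
  "sink_or_source_prob a b = 1 / (real a + 1) + 1 / (real b + 1) - 1 / (real a + real b + 1)"

lemma sink_or_source_prob_0 [simp]:
  "sink_or_source_prob 0 b = 1" "sink_or_source_prob a 0 = 1"
  by (simp_all add: sink_or_source_prob_def)

lemma sink_or_source_prob_recurrence:
  "real a * sink_or_source_prob (a - 1) b + real b * sink_or_source_prob a (b - 1)
     + of_bool (a = 0 \<or> b = 0)
   = (real a + real b + 1) * sink_or_source_prob a b"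
proof (cases "a = 0 \<or> b = 0")
  case True
  then show ?thesis by auto
next
  case False
  define x y where "x = real a" and "y = real b"
  have "x > 0" "y > 0"
    using False by (auto simp: x_def y_def)
  then have "x * (1 / x + 1 / (y + 1) - 1 / (x + y)) + y * (1 / (x + 1) + 1 / y - 1 / (x + y))
      = (x + y + 1) * (1 / (x + 1) + 1 / (y + 1) - 1 / (x + y + 1))"
    by (simp add: divide_simps) (simp add: algebra_simps)
  moreover have "real (a - 1) = x - 1" "real (b - 1) = y - 1"
    using False by (auto simp: x_def y_def)
  ultimately show ?thesis
    using False by (simp add: sink_or_source_prob_def x_def y_def add.commute)
qed

lemma sink_or_source_prob_closed_form:
  assumes "s * s = real a * real b"
  shows "sink_or_source_prob a b
    = ((real a + real b + 1)^2 - s^2) / ((s^2 + (real a + real b + 1)) * (real a + real b + 1))"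
proof -
  have "real a * real b \<ge> 0"
    by simp
  then have "1 + (real a + (real b + real a * real b)) \<noteq> 0"
    by linarith
  with assms show ?thesis
    by (simp add: sink_or_source_prob_def divide_simps add_pos_nonneg power2_eq_square)
      (simp add: algebra_simps)
qed

lemma sink_or_source_prob_ge:
  "sink_or_source_prob a b \<ge> 3 / (2 * sqrt (real a * real b) + 3)"
proof -
  define s where "s = sqrt (real a * real b)"
  define P where "P = real a + real b + 1"
  have s: "s \<ge> 0" "s * s = real a * real b"
    by (simp_all add: s_def)
  have "2 * s \<le> real a + real b"
    using arith_geo_mean_sqrt[of "real a" "real b"] by (simp add: s_def)
  then have P: "P \<ge> 2 * s + 1"
    by (simp add: P_def)
  have "2 * P + s \<le> (2 * P + s) * (P - 2 * s)"
    using mult_left_mono[of 1 "P - 2 * s" "2 * P + s"] P s by simp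
  then have "(2 * P + s) * (P - 2 * s) - 3 * s \<ge> 0"
    using P s by linarith
  then have "s * ((2 * P + s) * (P - 2 * s) - 3 * s) \<ge> 0"
    using s by simp
  also have "s * ((2 * P + s) * (P - 2 * s) - 3 * s)
      = (2 * s + 3) * (P^2 - s^2) - 3 * ((s^2 + P) * P)"
    by (simp add: algebra_simps power2_eq_square)
  finally have "3 * ((s^2 + P) * P) \<le> (2 * s + 3) * (P^2 - s^2)"
    by simp
  moreover have "(s^2 + P) * P > 0"
    using P s by (simp add: add_nonneg_pos)
  ultimately have "3 / (2 * s + 3) \<le> (P^2 - s^2) / ((s^2 + P) * P)"
    using s by (simp add: divide_simps mult.commute)
  then show ?thesis
    using sink_or_source_prob_closed_form[OF s(2)] by (simp add: s_def P_def)
qed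

definition sink_source_potential :: "'a set \<Rightarrow> ('a \<times> 'a) set \<Rightarrow> real" where
  "sink_source_potential W A
     = (\<Sum>v\<in>W. sink_or_source_prob (out_deg W A v) (in_deg W A v))"

lemma sum_sink_or_source_prob_delete:
  assumes "finite W" "v \<in> W" "digon_free A" "(v, v) \<notin> A"
  shows "(\<Sum>w\<in>W - {v}. sink_or_source_prob (out_deg (W - {w}) A v) (in_deg (W - {w}) A v))
           + of_bool (out_deg W A v = 0 \<or> in_deg W A v = 0)
         = real (card W) * sink_or_source_prob (out_deg W A v) (in_deg W A v)"
proof -
  define Out In where "Out = {u \<in> W. (v, u) \<in> A}" and "In = {u \<in> W. (u, v) \<in> A}"
  define R where "R = W - {v} - Out - In"
  define a b where "a = card Out" and "b = card In"
  define g where "g w = sink_or_source_prob (out_deg (W - {w}) A v) (in_deg (W - {w}) A v)" for w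
  have deg: "out_deg W A v = a" "in_deg W A v = b"
    by (simp_all add: out_deg_def in_deg_def a_def b_def Out_def In_def)
  have disj: "Out \<inter> In = {}"
    using assms(3) by (auto simp: Out_def In_def digon_free_def)
  have fin: "finite Out" "finite In" "finite R"
    using assms(1) by (simp_all add: Out_def In_def R_def)
  have split: "W - {v} = Out \<union> In \<union> R" "(Out \<union> In) \<inter> R = {}"
    using assms(4) by (auto simp: Out_def In_def R_def)
  have deg_delete: "out_deg (W - {w}) A v = card (Out - {w})" "in_deg (W - {w}) A v = card (In - {w})"
    for w unfolding out_deg_def in_deg_def Out_def In_def by (rule arg_cong[where f = card], blast)+
  have "g w = sink_or_source_prob (a - 1) b" if "w \<in> Out" for w
  proof -
    have "In - {w} = In"
      using that disj by blast
    then show ?thesis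
      using that fin by (simp add: g_def deg_delete a_def b_def)
  qed
  moreover have "g w = sink_or_source_prob a (b - 1)" if "w \<in> In" for w
  proof -
    have "Out - {w} = Out"
      using that disj by blast
    then show ?thesis
      using that fin by (simp add: g_def deg_delete a_def b_def)
  qed
  moreover have "g w = sink_or_source_prob a b" if "w \<in> R" for w
    using that by (simp add: g_def deg_delete a_def b_def R_def Diff_triv)
  ultimately have "(\<Sum>w\<in>W - {v}. g w)
      = real a * sink_or_source_prob (a - 1) b + real b * sink_or_source_prob a (b - 1)
        + real (card R) * sink_or_source_prob a b"
    using fin disj split by (simp add: sum.union_disjoint a_def b_def)
  moreover have "card W = a + b + 1 + card R"
    using assms(1,2) fin disj split by (simp add: card.remove card_Un_disjoint a_def b_def)
  ultimately show ?thesis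
    using sink_or_source_prob_recurrence[of a b] by (simp add: g_def deg algebra_simps)
qed

lemma sum_sink_source_potential_delete:
  assumes "finite W" "digon_free A" "\<forall>v. (v, v) \<notin> A"
  shows "(\<Sum>w\<in>W. sink_source_potential (W - {w}) A + of_bool (out_deg W A w = 0 \<or> in_deg W A w = 0))
         = real (card W) * sink_source_potential W A"
proof -
  define g where "g w v = sink_or_source_prob (out_deg (W - {w}) A v) (in_deg (W - {w}) A v)" for w v
  have "(\<Sum>w\<in>W. sink_source_potential (W - {w}) A) = (\<Sum>w\<in>W. \<Sum>v\<in>{v \<in> W. w \<noteq> v}. g w v)"
    unfolding sink_source_potential_def g_def by (intro sum.cong) auto
  also have "\<dots> = (\<Sum>v\<in>W. \<Sum>w\<in>{w \<in> W. w \<noteq> v}. g w v)"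
    by (rule sum.swap_restrict[OF assms(1) assms(1)])
  also have "\<dots> = (\<Sum>v\<in>W. \<Sum>w\<in>W - {v}. g w v)"
    by (intro sum.cong) auto
  finally have "(\<Sum>w\<in>W. sink_source_potential (W - {w}) A + of_bool (out_deg W A w = 0 \<or> in_deg W A w = 0))
      = (\<Sum>v\<in>W. (\<Sum>w\<in>W - {v}. g w v) + of_bool (out_deg W A v = 0 \<or> in_deg W A v = 0))"
    by (simp only: sum.distrib)
  also have "\<dots> = (\<Sum>v\<in>W. real (card W) * sink_or_source_prob (out_deg W A v) (in_deg W A v))"
    using sum_sink_or_source_prob_delete[OF assms(1) _ assms(2)] assms(3)
    by (intro sum.cong) (simp_all add: g_def)
  finally show ?thesis
    by (simp add: sink_source_potential_def sum_distrib_left)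
qed

lemma trancl_avoid_sink:
  assumes "(x, y) \<in> r\<^sup>+" "y \<noteq> w" "\<forall>u. (w, u) \<notin> r"
  shows "(x, y) \<in> (r \<inter> UNIV \<times> - {w})\<^sup>+"
  using assms(1,2)
proof (induction rule: trancl_induct)
  case (base y)
  then show ?case by blast
next
  case (step y z)
  then have "y \<noteq> w"
    using assms(3) by blast
  with step show ?case
    by (blast intro: trancl_into_trancl)
qed

lemma acyclic_insert_sink:
  assumes "acyclic (r \<inter> S \<times> S)" "\<forall>u\<in>insert w S. (w, u) \<notin> r"
  shows "acyclic (r \<inter> insert w S \<times> insert w S)"
proof (rule acyclicI, intro allI notI)
  fix x
  let ?r = "r \<inter> insert w S \<times> insert w S"
  assume cycle: "(x, x) \<in> ?r\<^sup>+"
  have no_out: "\<forall>u. (w, u) \<notin> ?r"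
    using assms(2) by blast
  then have "x \<noteq> w"
    using cycle by (metis tranclD)
  then have "(x, x) \<in> (?r \<inter> UNIV \<times> - {w})\<^sup>+"
    using trancl_avoid_sink[OF cycle _ no_out] by blast
  moreover have "?r \<inter> UNIV \<times> - {w} \<subseteq> r \<inter> S \<times> S"
    using no_out by blast
  ultimately have "(x, x) \<in> (r \<inter> S \<times> S)\<^sup>+"
    using trancl_mono by blast
  then show False
    using assms(1) by (simp add: acyclic_def)
qed

lemma acyclic_set_converse_iff: "acyclic_set (A\<inverse>) S \<longleftrightarrow> acyclic_set A S"
proof -
  have conv: "(A \<inter> S \<times> S)\<inverse> = A\<inverse> \<inter> S \<times> S"
    by auto
  show ?thesis
    unfolding acyclic_set_def by (simp only: flip: conv) (rule acyclic_converse)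
qed

lemma acyclic_set_insert_sink:
  assumes "acyclic_set A S" "S \<subseteq> W" "finite W" "(w, w) \<notin> A" "out_deg W A w = 0"
  shows "acyclic_set A (insert w S)"
proof -
  have "{u \<in> W. (w, u) \<in> A} = {}"
    using assms(3,5) by (simp add: out_deg_def)
  then have "\<forall>u\<in>insert w S. (w, u) \<notin> A"
    using assms(2,4) by blast
  with assms(1) show ?thesis
    unfolding acyclic_set_def by (rule acyclic_insert_sink)
qed

lemma acyclic_set_insert_sink_or_source:
  assumes "acyclic_set A S" "S \<subseteq> W" "finite W" "(w, w) \<notin> A"
    and "out_deg W A w = 0 \<or> in_deg W A w = 0"
  shows "acyclic_set A (insert w S)"
proof -
  have "in_deg W A w = out_deg W (A\<inverse>) w"
    by (simp add: in_deg_def out_deg_def)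
  then show ?thesis
    using assms acyclic_set_insert_sink[of A S W w] acyclic_set_insert_sink[of "A\<inverse>" S W w]
    by (auto simp: acyclic_set_converse_iff)
qed

lemma exists_acyclic_subset_ge_potential:
  assumes "finite W" "digon_free A" "\<forall>v. (v, v) \<notin> A"
  shows "\<exists>S\<subseteq>W. acyclic_set A S \<and> sink_source_potential W A \<le> real (card S)"
  using assms(1)
proof (induction W rule: finite_psubset_induct)
  case (psubset W)
  show ?case
  proof (cases "W = {}")
    case True
    then show ?thesis
      by (auto simp: sink_source_potential_def acyclic_set_def acyclic_def)
  next
    case False
    let ?gain = "\<lambda>w. of_bool (out_deg W A w = 0 \<or> in_deg W A w = 0) :: real"
    have "\<exists>w\<in>W. sink_source_potential W A \<le> sink_source_potential (W - {w}) A + ?gain w"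
    proof (rule ccontr)
      assume "\<not> ?thesis"
      then have "(\<Sum>w\<in>W. sink_source_potential (W - {w}) A + ?gain w)
          < (\<Sum>w\<in>W. sink_source_potential W A)"
        using psubset.hyps False by (intro sum_strict_mono) auto
      then show False
        using sum_sink_source_potential_delete[OF psubset.hyps assms(2,3)] by simp
    qed
    then obtain w where w: "w \<in> W"
      and gain: "sink_source_potential W A \<le> sink_source_potential (W - {w}) A + ?gain w"
      by blast
    obtain S where S: "S \<subseteq> W - {w}" "acyclic_set A S"
      "sink_source_potential (W - {w}) A \<le> real (card S)"
      using psubset.IH[of "W - {w}"] w by blast
    show ?thesis
    proof (cases "out_deg W A w = 0 \<or> in_deg W A w = 0")
      case True
      have "acyclic_set A (insert w S)"
        using acyclic_set_insert_sink_or_source[OF S(2) _ psubset.hyps _ True] S(1) assms(3) by blast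
      moreover have "card (insert w S) = card S + 1"
      proof -
        have "finite S"
          using finite_subset[OF S(1)] psubset.hyps by simp
        moreover have "w \<notin> S"
          using S(1) by blast
        ultimately show ?thesis
          by simp
      qed
      ultimately show ?thesis
        using S gain True w by (intro exI[of _ "insert w S"]) auto
    next
      case False
      then show ?thesis
        using S gain by auto
    qed
  qed
qed

lemma card_le_dichromatic_alpha:
  assumes "finite V" "S \<subseteq> V" "acyclic_set A S"
  shows "card S \<le> dichromatic_alpha V A"
  unfolding dichromatic_alpha_def
proof (rule Max_ge)
  have "{card S |S. S \<subseteq> V \<and> acyclic_set A S} \<subseteq> card ` Pow V"
    by blast
  then show "finite {card S |S. S \<subseteq> V \<and> acyclic_set A S}"
    using assms(1) finite_subset by blast
  show "card S \<in> {card S |S. S \<subseteq> V \<and> acyclic_set A S}"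
    using assms(2,3) by blast
qed

lemma geo_mean_deg_le_geo_max_deg:
  assumes "finite V" "v \<in> V"
  shows "sqrt (real (out_deg V A v) * real (in_deg V A v)) \<le> geo_max_deg V A"
  unfolding geo_max_deg_def using assms by (intro Max_ge) auto

lemma geo_max_deg_nonneg:
  assumes "finite V" "V \<noteq> {}"
  shows "geo_max_deg V A \<ge> 0"
proof -
  obtain v where "v \<in> V"
    using assms(2) by blast
  have "0 \<le> sqrt (real (out_deg V A v) * real (in_deg V A v))"
    by simp
  then show ?thesis
    using geo_mean_deg_le_geo_max_deg[OF assms(1) \<open>v \<in> V\<close>, of A] by linarith
qed

lemma sink_source_potential_ge:
  assumes "finite V"
  shows "real (card V) * (3 / (2 * geo_max_deg V A + 3)) \<le> sink_source_potential V A"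
proof -
  have "3 / (2 * geo_max_deg V A + 3) \<le> sink_or_source_prob (out_deg V A v) (in_deg V A v)"
    if "v \<in> V" for v
  proof -
    define t where "t = sqrt (real (out_deg V A v) * real (in_deg V A v))"
    have "0 \<le> t" "t \<le> geo_max_deg V A"
      using geo_mean_deg_le_geo_max_deg[OF assms that] by (simp_all add: t_def)
    then have "3 / (2 * geo_max_deg V A + 3) \<le> 3 / (2 * t + 3)"
      by (intro divide_left_mono) auto
    then show ?thesis
      using sink_or_source_prob_ge order_trans unfolding t_def by blast
  qed
  then have "(\<Sum>v\<in>V. 3 / (2 * geo_max_deg V A + 3)) \<le> sink_source_potential V A"
    unfolding sink_source_potential_def by (rule sum_mono)
  then show ?thesis
    by simp
qed

theorem mainTheorem2:
  fixes V :: "'a set" and A :: "('a \<times> 'a) set"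
  assumes "digraph V A" and "digon_free A"
  shows "real (dichromatic_alpha V A) \<ge> real (card V) / (2 * geo_max_deg V A / 3 + 1)"
proof (cases "V = {}")
  case True
  then show ?thesis by simp
next
  case False
  have fin: "finite V" and loopless: "\<forall>v. (v, v) \<notin> A"
    using assms(1) by (auto simp: digraph_def)
  obtain S where S: "S \<subseteq> V" "acyclic_set A S" "sink_source_potential V A \<le> real (card S)"
    using exists_acyclic_subset_ge_potential[OF fin assms(2) loopless] by blast
  have "geo_max_deg V A \<ge> 0"
    using geo_max_deg_nonneg[OF fin False] .
  then have "real (card V) / (2 * geo_max_deg V A / 3 + 1)
      = real (card V) * (3 / (2 * geo_max_deg V A + 3))"
    by (simp add: field_simps)
  also have "\<dots> \<le> real (card S)"
    using sink_source_potential_ge[OF fin, of A] S(3) by linarith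
  also have "\<dots> \<le> real (dichromatic_alpha V A)"
    using card_le_dichromatic_alpha[OF fin S(1,2)] by simp
  finally show ?thesis .
qed

end
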